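(* Let $\mathcal{C}$ be a rigid monoidal category. An object $f:A\to B$ of $\mathrm{Arr}(\mathcal{C})$ (with its pointwise monoidal structure) has a dual if and only if $f$ is an isomorphism in $\mathcal{C}$.
   Context: $\mathrm{Arr}(\mathcal{C})$ is the arrow category: objects are morphisms $h:A\to B$ of $\mathcal{C}$, morphisms $(A,B,h)\to(A',B',h')$ are pairs $(\phi_A,\phi_B)$ with $h'\circ\phi_A=\phi_B\circ h$, composition componentwise. Pointwise monoidal structure: $(f:A_1\to B_1)\otimes(g:A_2\to B_2)=f\otimes g:A_1\otimes A_2\to B_1\otimes B_2$, morphisms tensored componentwise, unit object $\mathrm{id}_{\mathbb{I}}$, associator and unitors componentwise from $\mathcal{C}$. Rigid means every object has (left and right) duals, with evaluation and coevaluation maps satisfying the snake identities. *)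

theory Defs
  imports Main
begin

text \<open>A (monoidal) category with object carrier cOb and morphism carrier cAr.
  cComp g f denotes the composite g after f (defined for Cod f = Dom g).\<close>

record ('o, 'm) mcat =
  cOb :: "'o set"
  cAr :: "'m set"
  cDom :: "'m \<Rightarrow> 'o"
  cCod :: "'m \<Rightarrow> 'o"
  cComp :: "'m \<Rightarrow> 'm \<Rightarrow> 'm"
  cId :: "'o \<Rightarrow> 'm"
  cTens :: "'o \<Rightarrow> 'o \<Rightarrow> 'o"
  cTensM :: "'m \<Rightarrow> 'm \<Rightarrow> 'm"
  cUnit :: "'o"
  cAssoc :: "'o \<Rightarrow> 'o \<Rightarrow> 'o \<Rightarrow> 'm"
  cLU :: "'o \<Rightarrow> 'm"
  cRU :: "'o \<Rightarrow> 'm"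

definition hom :: "('o,'m) mcat \<Rightarrow> 'o \<Rightarrow> 'o \<Rightarrow> 'm set" where
  "hom C a b = {f \<in> cAr C. cDom C f = a \<and> cCod C f = b}"

definition is_category :: "('o,'m) mcat \<Rightarrow> bool" where
  "is_category C \<longleftrightarrow>
     (\<forall>f\<in>cAr C. cDom C f \<in> cOb C \<and> cCod C f \<in> cOb C) \<and>
     (\<forall>a\<in>cOb C. cId C a \<in> hom C a a) \<and>
     (\<forall>f\<in>cAr C. \<forall>g\<in>cAr C. cCod C f = cDom C g \<longrightarrow>
         cComp C g f \<in> hom C (cDom C f) (cCod C g)) \<and>
     (\<forall>f\<in>cAr C. cComp C (cId C (cCod C f)) f = f \<and> cComp C f (cId C (cDom C f)) = f) \<and>
     (\<forall>f\<in>cAr C. \<forall>g\<in>cAr C. \<forall>h\<in>cAr C. cCod C f = cDom C g \<longrightarrow> cCod C g = cDom C h \<longrightarrow>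
         cComp C h (cComp C g f) = cComp C (cComp C h g) f)"

definition iso :: "('o,'m) mcat \<Rightarrow> 'm \<Rightarrow> bool" where
  "iso C f \<longleftrightarrow> f \<in> cAr C \<and>
     (\<exists>g\<in>hom C (cCod C f) (cDom C f).
        cComp C g f = cId C (cDom C f) \<and> cComp C f g = cId C (cCod C f))"

definition inv :: "('o,'m) mcat \<Rightarrow> 'm \<Rightarrow> 'm" where
  "inv C f = (THE g. g \<in> hom C (cCod C f) (cDom C f) \<and>
        cComp C g f = cId C (cDom C f) \<and> cComp C f g = cId C (cCod C f))"

definition is_monoidal :: "('o,'m) mcat \<Rightarrow> bool" where
  "is_monoidal C \<longleftrightarrow> is_category C \<and> cUnit C \<in> cOb C \<and>
     (\<forall>a\<in>cOb C. \<forall>b\<in>cOb C. cTens C a b \<in> cOb C) \<and>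
     (\<forall>f\<in>cAr C. \<forall>g\<in>cAr C. cTensM C f g \<in>
         hom C (cTens C (cDom C f) (cDom C g)) (cTens C (cCod C f) (cCod C g))) \<and>
     (\<forall>a\<in>cOb C. \<forall>b\<in>cOb C. cTensM C (cId C a) (cId C b) = cId C (cTens C a b)) \<and>
     (\<forall>f\<in>cAr C. \<forall>g\<in>cAr C. \<forall>f'\<in>cAr C. \<forall>g'\<in>cAr C.
         cCod C f = cDom C g \<longrightarrow> cCod C f' = cDom C g' \<longrightarrow>
         cTensM C (cComp C g f) (cComp C g' f') = cComp C (cTensM C g g') (cTensM C f f')) \<and>
     (\<forall>a\<in>cOb C. \<forall>b\<in>cOb C. \<forall>c\<in>cOb C.
         cAssoc C a b c \<in> hom C (cTens C (cTens C a b) c) (cTens C a (cTens C b c)) \<and>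
         iso C (cAssoc C a b c)) \<and>
     (\<forall>f\<in>cAr C. \<forall>g\<in>cAr C. \<forall>h\<in>cAr C.
         cComp C (cAssoc C (cCod C f) (cCod C g) (cCod C h)) (cTensM C (cTensM C f g) h) =
         cComp C (cTensM C f (cTensM C g h)) (cAssoc C (cDom C f) (cDom C g) (cDom C h))) \<and>
     (\<forall>a\<in>cOb C. cLU C a \<in> hom C (cTens C (cUnit C) a) a \<and> iso C (cLU C a)) \<and>
     (\<forall>f\<in>cAr C. cComp C (cLU C (cCod C f)) (cTensM C (cId C (cUnit C)) f) =
                 cComp C f (cLU C (cDom C f))) \<and>
     (\<forall>a\<in>cOb C. cRU C a \<in> hom C (cTens C a (cUnit C)) a \<and> iso C (cRU C a)) \<and>
     (\<forall>f\<in>cAr C. cComp C (cRU C (cCod C f)) (cTensM C f (cId C (cUnit C))) =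
                 cComp C f (cRU C (cDom C f))) \<and>
     (\<forall>a\<in>cOb C. \<forall>b\<in>cOb C. \<forall>c\<in>cOb C. \<forall>d\<in>cOb C.
         cComp C (cAssoc C a b (cTens C c d)) (cAssoc C (cTens C a b) c d) =
         cComp C (cTensM C (cId C a) (cAssoc C b c d))
           (cComp C (cAssoc C a (cTens C b c) d) (cTensM C (cAssoc C a b c) (cId C d)))) \<and>
     (\<forall>a\<in>cOb C. \<forall>b\<in>cOb C.
         cComp C (cTensM C (cId C a) (cLU C b)) (cAssoc C a (cUnit C) b) =
         cTensM C (cRU C a) (cId C b))"

text \<open>dual_pair C X Y eta eps: X is a left dual of Y (equivalently Y is a right dual of X),
  with coevaluation eta : I \<rightarrow> Y \<otimes> X and evaluation eps : X \<otimes> Y \<rightarrow> I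
  satisfying the two snake (zig-zag) identities.\<close>

definition dual_pair :: "('o,'m) mcat \<Rightarrow> 'o \<Rightarrow> 'o \<Rightarrow> 'm \<Rightarrow> 'm \<Rightarrow> bool" where
  "dual_pair C X Y eta eps \<longleftrightarrow> X \<in> cOb C \<and> Y \<in> cOb C \<and>
     eta \<in> hom C (cUnit C) (cTens C Y X) \<and> eps \<in> hom C (cTens C X Y) (cUnit C) \<and>
     cComp C (cLU C X) (cComp C (cTensM C eps (cId C X))
        (cComp C (inv C (cAssoc C X Y X)) (cComp C (cTensM C (cId C X) eta) (inv C (cRU C X)))))
       = cId C X \<and>
     cComp C (cRU C Y) (cComp C (cTensM C (cId C Y) eps)
        (cComp C (cAssoc C Y X Y) (cComp C (cTensM C eta (cId C Y)) (inv C (cLU C Y)))))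
       = cId C Y"

definition has_right_dual :: "('o,'m) mcat \<Rightarrow> 'o \<Rightarrow> bool" where
  "has_right_dual C X \<longleftrightarrow> (\<exists>Y eta eps. dual_pair C X Y eta eps)"

definition has_left_dual :: "('o,'m) mcat \<Rightarrow> 'o \<Rightarrow> bool" where
  "has_left_dual C Y \<longleftrightarrow> (\<exists>X eta eps. dual_pair C X Y eta eps)"

definition rigid :: "('o,'m) mcat \<Rightarrow> bool" where
  "rigid C \<longleftrightarrow> is_monoidal C \<and>
     (\<forall>X\<in>cOb C. has_left_dual C X \<and> has_right_dual C X)"

text \<open>Objects: morphisms h of C.  A morphism (h, h', pA, pB) : h \<rightarrow> h' is a commuting
  square h' o pA = pB o h.  Everything else is componentwise.\<close>

definition arr_cat :: "('o,'m) mcat \<Rightarrow> ('m, 'm \<times> 'm \<times> 'm \<times> 'm) mcat" where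
  "arr_cat C = \<lparr>
     cOb = cAr C,
     cAr = {(h, h', p, q). h \<in> cAr C \<and> h' \<in> cAr C \<and>
              p \<in> hom C (cDom C h) (cDom C h') \<and> q \<in> hom C (cCod C h) (cCod C h') \<and>
              cComp C h' p = cComp C q h},
     cDom = (\<lambda>(h, h', p, q). h),
     cCod = (\<lambda>(h, h', p, q). h'),
     cComp = (\<lambda>(h', h'', p', q') (h, h1, p, q). (h, h'', cComp C p' p, cComp C q' q)),
     cId = (\<lambda>h. (h, h, cId C (cDom C h), cId C (cCod C h))),
     cTens = cTensM C,
     cTensM = (\<lambda>(h1, h1', p1, q1) (h2, h2', p2, q2).
                 (cTensM C h1 h2, cTensM C h1' h2', cTensM C p1 p2, cTensM C q1 q2)),
     cUnit = cId C (cUnit C),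
     cAssoc = (\<lambda>f g k. (cTensM C (cTensM C f g) k, cTensM C f (cTensM C g k),
                        cAssoc C (cDom C f) (cDom C g) (cDom C k),
                        cAssoc C (cCod C f) (cCod C g) (cCod C k))),
     cLU = (\<lambda>f. (cTensM C (cId C (cUnit C)) f, f, cLU C (cDom C f), cLU C (cCod C f))),
     cRU = (\<lambda>f. (cTensM C f (cId C (cUnit C)), f, cRU C (cDom C f), cRU C (cCod C f)))
   \<rparr>"

end

theory Submission
  imports Defs
begin

text \<open>A duality between \<open>f : A \<rightarrow> B\<close> and \<open>g : A' \<rightarrow> B'\<close> in \<open>Arr(C)\<close> is the same as dualities
  between \<open>A, A'\<close> and between \<open>B, B'\<close> in \<open>C\<close> whose units and counits are compatible with \<open>f\<close>
  and \<open>g\<close>. The mate of \<open>g\<close>, a morphism \<open>B \<rightarrow> A\<close> built from the unit for \<open>A\<close> and the counit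
  for \<open>B\<close>, is then inverse to \<open>f\<close>: each of the two snake identities, rewritten with one of the
  compatibility squares, yields one of the two composites. Conversely, if \<open>f\<close> is invertible,
  a duality for \<open>A\<close> transported along \<open>f\<close> is a duality for \<open>B\<close>, and then the identity on the
  dual of \<open>A\<close> is dual to \<open>f\<close>; rigidity of \<open>C\<close> is needed only for this direction.\<close>

locale monoidal_cat =
  fixes C :: "('o,'m) mcat"
  assumes mon: "is_monoidal C"
begin

abbreviation Ob where "Ob \<equiv> cOb C"
abbreviation Ar where "Ar \<equiv> cAr C"
abbreviation Dom where "Dom \<equiv> cDom C"
abbreviation Cod where "Cod \<equiv> cCod C"
abbreviation comp_C (infixr "\<cdot>" 55) where "g \<cdot> f \<equiv> cComp C g f"
abbreviation tensor_C (infixr "\<otimes>" 60) where "f \<otimes> g \<equiv> cTensM C f g"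
abbreviation otimes_C (infixr "\<odot>" 60) where "a \<odot> b \<equiv> cTens C a b"
abbreviation idm where "idm a \<equiv> cId C a"
abbreviation \<I> where "\<I> \<equiv> cUnit C"
abbreviation assoc where "assoc \<equiv> cAssoc C"
abbreviation lunit where "lunit \<equiv> cLU C"
abbreviation runit where "runit \<equiv> cRU C"
abbreviation inv\<^sub>C where "inv\<^sub>C f \<equiv> Defs.inv C f"
abbreviation assoc' where "assoc' x y z \<equiv> Defs.inv C (cAssoc C x y z)"
abbreviation lunit' where "lunit' x \<equiv> Defs.inv C (cLU C x)"
abbreviation runit' where "runit' x \<equiv> Defs.inv C (cRU C x)"

lemma category_laws: "is_category C" using mon unfolding is_monoidal_def by blast

lemma monoidal_laws: "\<I> \<in> Ob" "\<forall>a\<in>Ob. \<forall>b\<in>Ob. a \<odot> b \<in> Ob"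
  "\<forall>f\<in>Ar. \<forall>g\<in>Ar. f \<otimes> g \<in> hom C (Dom f \<odot> Dom g) (Cod f \<odot> Cod g)"
  "\<forall>a\<in>Ob. \<forall>b\<in>Ob. idm a \<otimes> idm b = idm (a \<odot> b)"
  "\<forall>f\<in>Ar. \<forall>g\<in>Ar. \<forall>f'\<in>Ar. \<forall>g'\<in>Ar. Cod f = Dom g \<longrightarrow> Cod f' = Dom g' \<longrightarrow> (g \<cdot> f) \<otimes> (g' \<cdot> f') = (g \<otimes> g') \<cdot> (f \<otimes> f')"
  "\<forall>a\<in>Ob. \<forall>b\<in>Ob. \<forall>c\<in>Ob. assoc a b c \<in> hom C ((a \<odot> b) \<odot> c) (a \<odot> (b \<odot> c)) \<and> iso C (assoc a b c)"
  "\<forall>f\<in>Ar. \<forall>g\<in>Ar. \<forall>h\<in>Ar. assoc (Cod f) (Cod g) (Cod h) \<cdot> ((f \<otimes> g) \<otimes> h) = (f \<otimes> (g \<otimes> h)) \<cdot> assoc (Dom f) (Dom g) (Dom h)"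
  "\<forall>a\<in>Ob. lunit a \<in> hom C (\<I> \<odot> a) a \<and> iso C (lunit a)"
  "\<forall>f\<in>Ar. lunit (Cod f) \<cdot> (idm \<I> \<otimes> f) = f \<cdot> lunit (Dom f)"
  "\<forall>a\<in>Ob. runit a \<in> hom C (a \<odot> \<I>) a \<and> iso C (runit a)"
  "\<forall>f\<in>Ar. runit (Cod f) \<cdot> (f \<otimes> idm \<I>) = f \<cdot> runit (Dom f)"
  using mon unfolding is_monoidal_def apply - by (elim conjE, assumption)+

lemma ob_dom[simp]: "f \<in> Ar \<Longrightarrow> Dom f \<in> Ob" using category_laws unfolding is_category_def by blast
lemma ob_cod[simp]: "f \<in> Ar \<Longrightarrow> Cod f \<in> Ob" using category_laws unfolding is_category_def by blast
lemma ar_id[simp]: "a \<in> Ob \<Longrightarrow> idm a \<in> Ar" using category_laws unfolding is_category_def hom_def by blast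
lemma dom_id[simp]: "a \<in> Ob \<Longrightarrow> Dom (idm a) = a" using category_laws unfolding is_category_def hom_def by blast
lemma cod_id[simp]: "a \<in> Ob \<Longrightarrow> Cod (idm a) = a" using category_laws unfolding is_category_def hom_def by blast
lemma ar_comp[simp]: "f \<in> Ar \<Longrightarrow> g \<in> Ar \<Longrightarrow> Cod f = Dom g \<Longrightarrow> g \<cdot> f \<in> Ar"
  using category_laws unfolding is_category_def hom_def by blast
lemma dom_comp[simp]: "f \<in> Ar \<Longrightarrow> g \<in> Ar \<Longrightarrow> Cod f = Dom g \<Longrightarrow> Dom (g \<cdot> f) = Dom f"
  using category_laws unfolding is_category_def hom_def by blast
lemma cod_comp[simp]: "f \<in> Ar \<Longrightarrow> g \<in> Ar \<Longrightarrow> Cod f = Dom g \<Longrightarrow> Cod (g \<cdot> f) = Cod g"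
  using category_laws unfolding is_category_def hom_def by blast
lemma comp_id_l[simp]: "f \<in> Ar \<Longrightarrow> Cod f = a \<Longrightarrow> idm a \<cdot> f = f"
  using category_laws unfolding is_category_def by blast
lemma comp_id_r[simp]: "f \<in> Ar \<Longrightarrow> Dom f = a \<Longrightarrow> f \<cdot> idm a = f"
  using category_laws unfolding is_category_def by blast
lemma comp_assoc[simp]: "f \<in> Ar \<Longrightarrow> g \<in> Ar \<Longrightarrow> h \<in> Ar \<Longrightarrow> Cod f = Dom g \<Longrightarrow> Cod g = Dom h \<Longrightarrow>
   (h \<cdot> g) \<cdot> f = h \<cdot> (g \<cdot> f)"
  using category_laws unfolding is_category_def by metis

lemma ob_unit[simp]: "\<I> \<in> Ob" using monoidal_laws by blast
lemma ob_tens[simp]: "a \<in> Ob \<Longrightarrow> b \<in> Ob \<Longrightarrow> a \<odot> b \<in> Ob" using monoidal_laws by blast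
lemma ar_tens[simp]: "f \<in> Ar \<Longrightarrow> g \<in> Ar \<Longrightarrow> f \<otimes> g \<in> Ar" using monoidal_laws unfolding hom_def by blast
lemma dom_tens[simp]: "f \<in> Ar \<Longrightarrow> g \<in> Ar \<Longrightarrow> Dom (f \<otimes> g) = Dom f \<odot> Dom g" using monoidal_laws unfolding hom_def by blast
lemma cod_tens[simp]: "f \<in> Ar \<Longrightarrow> g \<in> Ar \<Longrightarrow> Cod (f \<otimes> g) = Cod f \<odot> Cod g" using monoidal_laws unfolding hom_def by blast
lemma tens_id: "a \<in> Ob \<Longrightarrow> b \<in> Ob \<Longrightarrow> idm a \<otimes> idm b = idm (a \<odot> b)" using monoidal_laws by blast
lemma interchange: "f \<in> Ar \<Longrightarrow> g \<in> Ar \<Longrightarrow> f' \<in> Ar \<Longrightarrow> g' \<in> Ar \<Longrightarrow> Cod f = Dom g \<Longrightarrow> Cod f' = Dom g' \<Longrightarrow>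
   (g \<cdot> f) \<otimes> (g' \<cdot> f') = (g \<otimes> g') \<cdot> (f \<otimes> f')" using monoidal_laws by blast
lemma tensor_comp_merge: "f \<in> Ar \<Longrightarrow> g \<in> Ar \<Longrightarrow> f' \<in> Ar \<Longrightarrow> g' \<in> Ar \<Longrightarrow> Cod f = Dom g \<Longrightarrow> Cod f' = Dom g' \<Longrightarrow>
   (g \<otimes> g') \<cdot> (f \<otimes> f') = (g \<cdot> f) \<otimes> (g' \<cdot> f')" using interchange by simp
lemma tensor_comp_merge_prolong: "f \<in> Ar \<Longrightarrow> g \<in> Ar \<Longrightarrow> f' \<in> Ar \<Longrightarrow> g' \<in> Ar \<Longrightarrow> Cod f = Dom g \<Longrightarrow> Cod f' = Dom g' \<Longrightarrow>
   y \<in> Ar \<Longrightarrow> Cod y = Dom f \<odot> Dom f' \<Longrightarrow>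
   (g \<otimes> g') \<cdot> ((f \<otimes> f') \<cdot> y) = ((g \<cdot> f) \<otimes> (g' \<cdot> f')) \<cdot> y"
  by (metis comp_assoc tensor_comp_merge ar_tens dom_tens cod_tens)

lemma assoc_ar[simp]: "x \<in> Ob \<Longrightarrow> y \<in> Ob \<Longrightarrow> z \<in> Ob \<Longrightarrow> assoc x y z \<in> Ar"
  using monoidal_laws unfolding hom_def by blast
lemma assoc_dom[simp]: "x \<in> Ob \<Longrightarrow> y \<in> Ob \<Longrightarrow> z \<in> Ob \<Longrightarrow> Dom (assoc x y z) = (x \<odot> y) \<odot> z"
  using monoidal_laws unfolding hom_def by blast
lemma assoc_cod[simp]: "x \<in> Ob \<Longrightarrow> y \<in> Ob \<Longrightarrow> z \<in> Ob \<Longrightarrow> Cod (assoc x y z) = x \<odot> (y \<odot> z)"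
  using monoidal_laws unfolding hom_def by blast
lemma assoc_iso[simp]: "x \<in> Ob \<Longrightarrow> y \<in> Ob \<Longrightarrow> z \<in> Ob \<Longrightarrow> iso C (assoc x y z)"
  using monoidal_laws by blast
lemma assoc_nat: "f \<in> Ar \<Longrightarrow> g \<in> Ar \<Longrightarrow> h \<in> Ar \<Longrightarrow>
  assoc (Cod f) (Cod g) (Cod h) \<cdot> ((f \<otimes> g) \<otimes> h) = (f \<otimes> (g \<otimes> h)) \<cdot> assoc (Dom f) (Dom g) (Dom h)"
  using monoidal_laws by blast

lemma lunit_ar[simp]: "x \<in> Ob \<Longrightarrow> lunit x \<in> Ar" using monoidal_laws unfolding hom_def by blast
lemma lunit_dom[simp]: "x \<in> Ob \<Longrightarrow> Dom (lunit x) = \<I> \<odot> x" using monoidal_laws unfolding hom_def by blast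
lemma lunit_cod[simp]: "x \<in> Ob \<Longrightarrow> Cod (lunit x) = x" using monoidal_laws unfolding hom_def by blast
lemma lunit_iso[simp]: "x \<in> Ob \<Longrightarrow> iso C (lunit x)" using monoidal_laws by blast
lemma lunit_nat: "f \<in> Ar \<Longrightarrow> lunit (Cod f) \<cdot> (idm \<I> \<otimes> f) = f \<cdot> lunit (Dom f)"
  using monoidal_laws by blast
lemma runit_ar[simp]: "x \<in> Ob \<Longrightarrow> runit x \<in> Ar" using monoidal_laws unfolding hom_def by blast
lemma runit_dom[simp]: "x \<in> Ob \<Longrightarrow> Dom (runit x) = x \<odot> \<I>" using monoidal_laws unfolding hom_def by blast
lemma runit_cod[simp]: "x \<in> Ob \<Longrightarrow> Cod (runit x) = x" using monoidal_laws unfolding hom_def by blast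
lemma runit_iso[simp]: "x \<in> Ob \<Longrightarrow> iso C (runit x)" using monoidal_laws by blast
lemma runit_nat: "f \<in> Ar \<Longrightarrow> runit (Cod f) \<cdot> (f \<otimes> idm \<I>) = f \<cdot> runit (Dom f)"
  using monoidal_laws by blast

lemma inverse_unique:
  assumes "f \<in> Ar" "g \<in> Ar" "Dom g = Cod f" "Cod g = Dom f" "g \<cdot> f = idm (Dom f)" "f \<cdot> g = idm (Cod f)"
    "g' \<in> Ar" "Dom g' = Cod f" "Cod g' = Dom f" "g' \<cdot> f = idm (Dom f)" "f \<cdot> g' = idm (Cod f)"
  shows "g' = g"
proof -
  have "g' = g' \<cdot> (f \<cdot> g)" using assms by simp
  also have "\<dots> = (g' \<cdot> f) \<cdot> g" using assms comp_assoc[of g f g'] by metis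
  also have "\<dots> = g" using assms by simp
  finally show ?thesis .
qed

lemma inv_eqI:
  assumes "f \<in> Ar" "g \<in> Ar" "Dom g = Cod f" "Cod g = Dom f" "g \<cdot> f = idm (Dom f)" "f \<cdot> g = idm (Cod f)"
  shows "inv\<^sub>C f = g"
  unfolding inv_def
proof (rule the_equality)
  show "g \<in> hom C (Cod f) (Dom f) \<and> g \<cdot> f = idm (Dom f) \<and> f \<cdot> g = idm (Cod f)"
    using assms unfolding hom_def by blast
next
  fix g' assume "g' \<in> hom C (Cod f) (Dom f) \<and> g' \<cdot> f = idm (Dom f) \<and> f \<cdot> g' = idm (Cod f)"
  then show "g' = g" using inverse_unique[OF assms] unfolding hom_def by blast
qed

lemma inv_props:
  assumes "iso C f"
  shows "inv\<^sub>C f \<in> Ar \<and> Dom (inv\<^sub>C f) = Cod f \<and> Cod (inv\<^sub>C f) = Dom f \<and> inv\<^sub>C f \<cdot> f = idm (Dom f) \<and> f \<cdot> inv\<^sub>C f = idm (Cod f)"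
proof -
  obtain g where "f \<in> Ar" "g \<in> Ar" "Dom g = Cod f" "Cod g = Dom f" "g \<cdot> f = idm (Dom f)" "f \<cdot> g = idm (Cod f)"
    using assms unfolding iso_def hom_def by blast
  with inv_eqI[OF this] show ?thesis by simp
qed

lemma iso_ar: "iso C f \<Longrightarrow> f \<in> Ar" unfolding iso_def by blast
lemma inv_ar[simp]: "iso C f \<Longrightarrow> inv\<^sub>C f \<in> Ar" using inv_props by blast
lemma inv_dom[simp]: "iso C f \<Longrightarrow> Dom (inv\<^sub>C f) = Cod f" using inv_props by blast
lemma inv_cod[simp]: "iso C f \<Longrightarrow> Cod (inv\<^sub>C f) = Dom f" using inv_props by blast
lemma inv_l[simp]: "iso C f \<Longrightarrow> inv\<^sub>C f \<cdot> f = idm (Dom f)" using inv_props by blast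
lemma inv_r[simp]: "iso C f \<Longrightarrow> f \<cdot> inv\<^sub>C f = idm (Cod f)" using inv_props by blast
lemma inv_l_cont[simp]: "iso C f \<Longrightarrow> y \<in> Ar \<Longrightarrow> Cod y = Dom f \<Longrightarrow> inv\<^sub>C f \<cdot> (f \<cdot> y) = y"
  using comp_assoc[of y f "inv\<^sub>C f"] iso_ar[of f] by simp
lemma inv_r_cont[simp]: "iso C f \<Longrightarrow> y \<in> Ar \<Longrightarrow> Cod y = Cod f \<Longrightarrow> f \<cdot> (inv\<^sub>C f \<cdot> y) = y"
  using comp_assoc[of y "inv\<^sub>C f" f] iso_ar[of f] by simp

lemma iso_square_inv:
  assumes u: "iso C u" and v: "iso C v" and ab: "a \<in> Ar" "b \<in> Ar"
    and t: "Cod a = Dom u" "Dom b = Cod v" "Dom a = Dom v" "Cod b = Cod u"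
    and eq: "u \<cdot> a = b \<cdot> v"
  shows "a \<cdot> inv\<^sub>C v = inv\<^sub>C u \<cdot> b"
proof -
  have uv: "u \<in> Ar" "v \<in> Ar" using u v iso_ar by auto
  have "inv\<^sub>C u \<cdot> ((u \<cdot> a) \<cdot> inv\<^sub>C v) = inv\<^sub>C u \<cdot> ((b \<cdot> v) \<cdot> inv\<^sub>C v)" using eq by simp
  thus ?thesis using u v ab t uv by simp
qed

lemma assoc'_ar[simp]: "x \<in> Ob \<Longrightarrow> y \<in> Ob \<Longrightarrow> z \<in> Ob \<Longrightarrow> assoc' x y z \<in> Ar" by simp
lemma assoc'_dom[simp]: "x \<in> Ob \<Longrightarrow> y \<in> Ob \<Longrightarrow> z \<in> Ob \<Longrightarrow> Dom (assoc' x y z) = x \<odot> (y \<odot> z)" by simp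
lemma assoc'_cod[simp]: "x \<in> Ob \<Longrightarrow> y \<in> Ob \<Longrightarrow> z \<in> Ob \<Longrightarrow> Cod (assoc' x y z) = (x \<odot> y) \<odot> z" by simp
lemma lunit'_ar[simp]: "x \<in> Ob \<Longrightarrow> lunit' x \<in> Ar" by simp
lemma lunit'_dom[simp]: "x \<in> Ob \<Longrightarrow> Dom (lunit' x) = x" by simp
lemma lunit'_cod[simp]: "x \<in> Ob \<Longrightarrow> Cod (lunit' x) = \<I> \<odot> x" by simp
lemma runit'_ar[simp]: "x \<in> Ob \<Longrightarrow> runit' x \<in> Ar" by simp
lemma runit'_dom[simp]: "x \<in> Ob \<Longrightarrow> Dom (runit' x) = x" by simp
lemma runit'_cod[simp]: "x \<in> Ob \<Longrightarrow> Cod (runit' x) = x \<odot> \<I>" by simp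

lemmas typing = ob_dom ob_cod ar_id dom_id cod_id ar_comp dom_comp cod_comp ob_unit ob_tens
  ar_tens dom_tens cod_tens assoc_ar assoc_dom assoc_cod assoc_iso lunit_ar lunit_dom lunit_cod lunit_iso
  runit_ar runit_dom runit_cod runit_iso inv_ar inv_dom inv_cod assoc'_ar assoc'_dom assoc'_cod lunit'_ar lunit'_dom lunit'_cod
  runit'_ar runit'_dom runit'_cod

lemmas tensor_comp = tensor_comp_merge tensor_comp_merge_prolong tens_id

lemma assoc'_nat: "f \<in> Ar \<Longrightarrow> g \<in> Ar \<Longrightarrow> h \<in> Ar \<Longrightarrow>
  assoc' (Cod f) (Cod g) (Cod h) \<cdot> (f \<otimes> (g \<otimes> h)) = ((f \<otimes> g) \<otimes> h) \<cdot> assoc' (Dom f) (Dom g) (Dom h)"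
  using iso_square_inv[of "assoc (Cod f) (Cod g) (Cod h)" "assoc (Dom f) (Dom g) (Dom h)" "(f \<otimes> g) \<otimes> h" "f \<otimes> (g \<otimes> h)"]
    assoc_nat[of f g h] by simp

lemma lunit'_nat:
  assumes "f \<in> Ar" "Cod f = x"
  shows "lunit' x \<cdot> f = (idm \<I> \<otimes> f) \<cdot> lunit' (Dom f)"
  unfolding assms(2)[symmetric]
  using iso_square_inv[of "lunit (Cod f)" "lunit (Dom f)" "idm \<I> \<otimes> f" f] lunit_nat[of f] assms(1) by simp

lemma runit'_nat:
  assumes "f \<in> Ar" "Cod f = x"
  shows "runit' x \<cdot> f = (f \<otimes> idm \<I>) \<cdot> runit' (Dom f)"
  unfolding assms(2)[symmetric]
  using iso_square_inv[of "runit (Cod f)" "runit (Dom f)" "f \<otimes> idm \<I>" f] runit_nat[of f] assms(1) by simp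

lemma comp_eq_prolong: "p \<cdot> q = r \<cdot> s \<Longrightarrow> p \<in> Ar \<Longrightarrow> q \<in> Ar \<Longrightarrow> r \<in> Ar \<Longrightarrow> s \<in> Ar \<Longrightarrow> w \<in> Ar \<Longrightarrow>
  Cod q = Dom p \<Longrightarrow> Cod s = Dom r \<Longrightarrow> Cod w = Dom q \<Longrightarrow> Dom s = Dom q \<Longrightarrow> p \<cdot> (q \<cdot> w) = r \<cdot> (s \<cdot> w)"
  by (metis comp_assoc)

lemma assoc_nat_comp:
  assumes a: "f \<in> Ar" "g \<in> Ar" "h \<in> Ar" "w \<in> Ar" "Cod w = (Dom f \<odot> Dom g) \<odot> Dom h"
    and e: "Cod f = x" "Cod g = y" "Cod h = z"
  shows "assoc x y z \<cdot> (((f \<otimes> g) \<otimes> h) \<cdot> w) = (f \<otimes> (g \<otimes> h)) \<cdot> (assoc (Dom f) (Dom g) (Dom h) \<cdot> w)"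
  unfolding e[symmetric] by (rule comp_eq_prolong[OF assoc_nat]) (use a e in auto)

lemma assoc_nat_comp_rev:
  assumes a: "f \<in> Ar" "g \<in> Ar" "h \<in> Ar" "w \<in> Ar" "Cod w = (x \<odot> y) \<odot> z"
    and e: "Dom f = x" "Dom g = y" "Dom h = z"
  shows "(f \<otimes> (g \<otimes> h)) \<cdot> (assoc x y z \<cdot> w) = assoc (Cod f) (Cod g) (Cod h) \<cdot> (((f \<otimes> g) \<otimes> h) \<cdot> w)"
  unfolding e[symmetric] by (rule comp_eq_prolong[OF assoc_nat[symmetric]]) (use a e in auto)

lemma assoc'_nat_comp:
  assumes a: "f \<in> Ar" "g \<in> Ar" "h \<in> Ar" "w \<in> Ar" "Cod w = Dom f \<odot> (Dom g \<odot> Dom h)"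
    and e: "Cod f = x" "Cod g = y" "Cod h = z"
  shows "assoc' x y z \<cdot> ((f \<otimes> (g \<otimes> h)) \<cdot> w) = ((f \<otimes> g) \<otimes> h) \<cdot> (assoc' (Dom f) (Dom g) (Dom h) \<cdot> w)"
  unfolding e[symmetric] by (rule comp_eq_prolong[OF assoc'_nat]) (use a e in auto)

lemma assoc'_nat_comp_rev:
  assumes a: "f \<in> Ar" "g \<in> Ar" "h \<in> Ar" "w \<in> Ar" "Cod w = x \<odot> (y \<odot> z)"
    and e: "Dom f = x" "Dom g = y" "Dom h = z"
  shows "((f \<otimes> g) \<otimes> h) \<cdot> (assoc' x y z \<cdot> w) = assoc' (Cod f) (Cod g) (Cod h) \<cdot> ((f \<otimes> (g \<otimes> h)) \<cdot> w)"
  unfolding e[symmetric] by (rule comp_eq_prolong[OF assoc'_nat[symmetric]]) (use a e in auto)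

lemma lunit_nat_comp:
  assumes a: "f \<in> Ar" "w \<in> Ar" "Cod w = \<I> \<odot> Dom f"
    and e: "Cod f = x"
  shows "lunit x \<cdot> ((idm \<I> \<otimes> f) \<cdot> w) = f \<cdot> (lunit (Dom f) \<cdot> w)"
  unfolding e[symmetric] by (rule comp_eq_prolong[OF lunit_nat]) (use a e in auto)

lemma lunit_nat_comp_rev:
  assumes a: "f \<in> Ar" "w \<in> Ar" "Cod w = \<I> \<odot> x"
    and e: "Dom f = x"
  shows "f \<cdot> (lunit x \<cdot> w) = lunit (Cod f) \<cdot> ((idm \<I> \<otimes> f) \<cdot> w)"
  unfolding e[symmetric] by (rule comp_eq_prolong[OF lunit_nat[symmetric]]) (use a e in auto)

lemma runit_nat_comp:
  assumes a: "f \<in> Ar" "w \<in> Ar" "Cod w = Dom f \<odot> \<I>"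
    and e: "Cod f = x"
  shows "runit x \<cdot> ((f \<otimes> idm \<I>) \<cdot> w) = f \<cdot> (runit (Dom f) \<cdot> w)"
  unfolding e[symmetric] by (rule comp_eq_prolong[OF runit_nat]) (use a e in auto)

lemma runit_nat_comp_rev:
  assumes a: "f \<in> Ar" "w \<in> Ar" "Cod w = x \<odot> \<I>"
    and e: "Dom f = x"
  shows "f \<cdot> (runit x \<cdot> w) = runit (Cod f) \<cdot> ((f \<otimes> idm \<I>) \<cdot> w)"
  unfolding e[symmetric] by (rule comp_eq_prolong[OF runit_nat[symmetric]]) (use a e in auto)

lemma eq_id_if_comp_iso_self: "iso C u \<Longrightarrow> p \<in> Ar \<Longrightarrow> Dom p = Cod u \<Longrightarrow> p \<cdot> u = u \<Longrightarrow> p = idm (Cod u)"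
proof -
  assume u: "iso C u" and p: "p \<in> Ar" "Dom p = Cod u" "p \<cdot> u = u"
  have uA: "u \<in> Ar" using u iso_ar by blast
  have "p = p \<cdot> (u \<cdot> inv\<^sub>C u)" using u p by simp
  also have "\<dots> = (p \<cdot> u) \<cdot> inv\<^sub>C u" by (rule comp_assoc[symmetric]) (use u p uA in simp_all)
  also have "\<dots> = idm (Cod u)" using p u by simp
  finally show ?thesis .
qed

lemma dual_pairD:
  assumes "dual_pair C X Y eta eps"
  shows "X \<in> Ob" "Y \<in> Ob" "eta \<in> Ar" "Dom eta = \<I>" "Cod eta = Y \<odot> X" "eps \<in> Ar" "Dom eps = X \<odot> Y" "Cod eps = \<I>"
    "lunit X \<cdot> (eps \<otimes> idm X) \<cdot> assoc' X Y X \<cdot> (idm X \<otimes> eta) \<cdot> runit' X = idm X"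
    "runit Y \<cdot> (idm Y \<otimes> eps) \<cdot> assoc Y X Y \<cdot> (eta \<otimes> idm Y) \<cdot> lunit' Y = idm Y"
  using assms unfolding dual_pair_def hom_def by auto

lemma dual_pair_transport_left:
  assumes dp: "dual_pair C X Y eta eps" and u: "iso C u" "Dom u = X" "Cod u = X'"
  shows "dual_pair C X' Y ((idm Y \<otimes> u) \<cdot> eta) (eps \<cdot> (inv\<^sub>C u \<otimes> idm Y))"
proof -
  note d = dual_pairD[OF dp]
  have uA: "u \<in> Ar" using u iso_ar by blast
  have X': "X' \<in> Ob" using uA u by auto
  note typed = d(1-8) u uA X'
  txt \<open>Precomposed with \<open>u\<close>, the new snake becomes \<open>u\<close> followed by the old one.\<close>
  have S1: "lunit X' \<cdot> ((eps \<cdot> (inv\<^sub>C u \<otimes> idm Y)) \<otimes> idm X') \<cdot> assoc' X' Y X' \<cdot> (idm X' \<otimes> ((idm Y \<otimes> u) \<cdot> eta)) \<cdot> runit' X' = idm X'" (is "?S = _")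
  proof -
    have "(lunit X' \<cdot> ((eps \<cdot> (inv\<^sub>C u \<otimes> idm Y)) \<otimes> idm X') \<cdot> assoc' X' Y X' \<cdot> (idm X' \<otimes> ((idm Y \<otimes> u) \<cdot> eta)) \<cdot> runit' X') \<cdot> u
      = lunit X' \<cdot> ((eps \<cdot> (inv\<^sub>C u \<otimes> idm Y)) \<otimes> idm X') \<cdot> assoc' X' Y X' \<cdot> (idm X' \<otimes> ((idm Y \<otimes> u) \<cdot> eta)) \<cdot> runit' X' \<cdot> u"
      using typed by simp
    also have "\<dots> = lunit X' \<cdot> ((eps \<cdot> (inv\<^sub>C u \<otimes> idm Y)) \<otimes> idm X') \<cdot> assoc' X' Y X' \<cdot> (idm X' \<otimes> ((idm Y \<otimes> u) \<cdot> eta)) \<cdot> (u \<otimes> idm \<I>) \<cdot> runit' X"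
      using typed by (simp only: typing runit'_nat)
    also have "\<dots> = lunit X' \<cdot> ((eps \<cdot> (inv\<^sub>C u \<otimes> idm Y)) \<otimes> idm X') \<cdot> assoc' X' Y X' \<cdot> (u \<otimes> (idm Y \<otimes> u)) \<cdot> (idm X \<otimes> eta) \<cdot> runit' X"
      using typed by (simp add: tensor_comp)
    also have "\<dots> = lunit X' \<cdot> ((eps \<cdot> (inv\<^sub>C u \<otimes> idm Y)) \<otimes> idm X') \<cdot> ((u \<otimes> idm Y) \<otimes> u) \<cdot> assoc' X Y X \<cdot> (idm X \<otimes> eta) \<cdot> runit' X"
      using typed by (simp only: typing assoc'_nat_comp)
    also have "\<dots> = lunit X' \<cdot> (idm \<I> \<otimes> u) \<cdot> (eps \<otimes> idm X) \<cdot> assoc' X Y X \<cdot> (idm X \<otimes> eta) \<cdot> runit' X"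
      using typed by (simp add: tensor_comp)
    also have "\<dots> = u \<cdot> lunit X \<cdot> (eps \<otimes> idm X) \<cdot> assoc' X Y X \<cdot> (idm X \<otimes> eta) \<cdot> runit' X"
      using typed by (simp only: typing lunit_nat_comp)
    also have "\<dots> = u" using typed d(9) by simp
    finally have E: "?S \<cdot> u = u" .
    have "?S = idm (Cod u)" by (rule eq_id_if_comp_iso_self[OF u(1) _ _ E]) (use typed in simp_all)
    with u(3) show ?thesis by simp
  qed
  have S2: "runit Y \<cdot> (idm Y \<otimes> (eps \<cdot> (inv\<^sub>C u \<otimes> idm Y))) \<cdot> assoc Y X' Y \<cdot> (((idm Y \<otimes> u) \<cdot> eta) \<otimes> idm Y) \<cdot> lunit' Y = idm Y"
  proof -
    have "runit Y \<cdot> (idm Y \<otimes> (eps \<cdot> (inv\<^sub>C u \<otimes> idm Y))) \<cdot> assoc Y X' Y \<cdot> (((idm Y \<otimes> u) \<cdot> eta) \<otimes> idm Y) \<cdot> lunit' Y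
      = runit Y \<cdot> (idm Y \<otimes> eps) \<cdot> (idm Y \<otimes> (inv\<^sub>C u \<otimes> idm Y)) \<cdot> assoc Y X' Y \<cdot> (((idm Y \<otimes> u) \<cdot> eta) \<otimes> idm Y) \<cdot> lunit' Y"
      using typed by (simp add: tensor_comp)
    also have "\<dots> = runit Y \<cdot> (idm Y \<otimes> eps) \<cdot> assoc Y X Y \<cdot> ((idm Y \<otimes> inv\<^sub>C u) \<otimes> idm Y) \<cdot> (((idm Y \<otimes> u) \<cdot> eta) \<otimes> idm Y) \<cdot> lunit' Y"
      using typed by (simp only: typing assoc_nat_comp_rev)
    also have "\<dots> = runit Y \<cdot> (idm Y \<otimes> eps) \<cdot> assoc Y X Y \<cdot> (eta \<otimes> idm Y) \<cdot> lunit' Y"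
      using typed by (simp add: tensor_comp)
    also have "\<dots> = idm Y" using d(10) .
    finally show ?thesis .
  qed
  show ?thesis unfolding dual_pair_def hom_def using typed S1 S2 by simp
qed

lemma dual_pair_transport_right:
  assumes dp: "dual_pair C X Y eta eps" and u: "iso C u" "Dom u = Y" "Cod u = Y'"
  shows "dual_pair C X Y' ((u \<otimes> idm X) \<cdot> eta) (eps \<cdot> (idm X \<otimes> inv\<^sub>C u))"
proof -
  note d = dual_pairD[OF dp]
  have uA: "u \<in> Ar" using u iso_ar by blast
  have Y': "Y' \<in> Ob" using uA u by auto
  note typed = d(1-8) u uA Y'
  have S1: "lunit X \<cdot> ((eps \<cdot> (idm X \<otimes> inv\<^sub>C u)) \<otimes> idm X) \<cdot> assoc' X Y' X \<cdot> (idm X \<otimes> ((u \<otimes> idm X) \<cdot> eta)) \<cdot> runit' X = idm X"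
  proof -
    have "lunit X \<cdot> ((eps \<cdot> (idm X \<otimes> inv\<^sub>C u)) \<otimes> idm X) \<cdot> assoc' X Y' X \<cdot> (idm X \<otimes> ((u \<otimes> idm X) \<cdot> eta)) \<cdot> runit' X
      = lunit X \<cdot> (eps \<otimes> idm X) \<cdot> ((idm X \<otimes> inv\<^sub>C u) \<otimes> idm X) \<cdot> assoc' X Y' X \<cdot> (idm X \<otimes> ((u \<otimes> idm X) \<cdot> eta)) \<cdot> runit' X"
      using typed by (simp add: tensor_comp)
    also have "\<dots> = lunit X \<cdot> (eps \<otimes> idm X) \<cdot> assoc' X Y X \<cdot> (idm X \<otimes> (inv\<^sub>C u \<otimes> idm X)) \<cdot> (idm X \<otimes> ((u \<otimes> idm X) \<cdot> eta)) \<cdot> runit' X"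
      using typed by (simp only: typing assoc'_nat_comp_rev)
    also have "\<dots> = lunit X \<cdot> (eps \<otimes> idm X) \<cdot> assoc' X Y X \<cdot> (idm X \<otimes> eta) \<cdot> runit' X"
      using typed by (simp add: tensor_comp)
    also have "\<dots> = idm X" using d(9) .
    finally show ?thesis .
  qed
  have S2: "runit Y' \<cdot> (idm Y' \<otimes> (eps \<cdot> (idm X \<otimes> inv\<^sub>C u))) \<cdot> assoc Y' X Y' \<cdot> (((u \<otimes> idm X) \<cdot> eta) \<otimes> idm Y') \<cdot> lunit' Y' = idm Y'" (is "?S = _")
  proof -
    have "(runit Y' \<cdot> (idm Y' \<otimes> (eps \<cdot> (idm X \<otimes> inv\<^sub>C u))) \<cdot> assoc Y' X Y' \<cdot> (((u \<otimes> idm X) \<cdot> eta) \<otimes> idm Y') \<cdot> lunit' Y') \<cdot> u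
      = runit Y' \<cdot> (idm Y' \<otimes> (eps \<cdot> (idm X \<otimes> inv\<^sub>C u))) \<cdot> assoc Y' X Y' \<cdot> (((u \<otimes> idm X) \<cdot> eta) \<otimes> idm Y') \<cdot> lunit' Y' \<cdot> u"
      using typed by simp
    also have "\<dots> = runit Y' \<cdot> (idm Y' \<otimes> (eps \<cdot> (idm X \<otimes> inv\<^sub>C u))) \<cdot> assoc Y' X Y' \<cdot> (((u \<otimes> idm X) \<cdot> eta) \<otimes> idm Y') \<cdot> (idm \<I> \<otimes> u) \<cdot> lunit' Y"
      using typed by (simp only: typing lunit'_nat)
    also have "\<dots> = runit Y' \<cdot> (idm Y' \<otimes> (eps \<cdot> (idm X \<otimes> inv\<^sub>C u))) \<cdot> assoc Y' X Y' \<cdot> ((u \<otimes> idm X) \<otimes> u) \<cdot> (eta \<otimes> idm Y) \<cdot> lunit' Y"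
      using typed by (simp add: tensor_comp)
    also have "\<dots> = runit Y' \<cdot> (idm Y' \<otimes> (eps \<cdot> (idm X \<otimes> inv\<^sub>C u))) \<cdot> (u \<otimes> (idm X \<otimes> u)) \<cdot> assoc Y X Y \<cdot> (eta \<otimes> idm Y) \<cdot> lunit' Y"
      using typed by (simp only: typing assoc_nat_comp)
    also have "\<dots> = runit Y' \<cdot> (u \<otimes> idm \<I>) \<cdot> (idm Y \<otimes> eps) \<cdot> assoc Y X Y \<cdot> (eta \<otimes> idm Y) \<cdot> lunit' Y"
      using typed by (simp add: tensor_comp)
    also have "\<dots> = u \<cdot> runit Y \<cdot> (idm Y \<otimes> eps) \<cdot> assoc Y X Y \<cdot> (eta \<otimes> idm Y) \<cdot> lunit' Y"
      using typed by (simp only: typing runit_nat_comp)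
    also have "\<dots> = u" using typed d(10) by simp
    finally have E: "?S \<cdot> u = u" .
    have "?S = idm (Cod u)" by (rule eq_id_if_comp_iso_self[OF u(1) _ _ E]) (use typed in simp_all)
    with u(3) show ?thesis by simp
  qed
  show ?thesis unfolding dual_pair_def hom_def using typed S1 S2 by simp
qed

text \<open>The mate of \<open>g : Y \<rightarrow> Y'\<close> with respect to dualities \<open>dual_pair C X Y eta _\<close> and
  \<open>dual_pair C X' Y' _ eps'\<close> is a morphism \<open>X' \<rightarrow> X\<close>; \<open>left_mate\<close> is the mirror image.\<close>

definition right_mate :: "'o \<Rightarrow> 'o \<Rightarrow> 'm \<Rightarrow> 'm \<Rightarrow> 'm \<Rightarrow> 'm" where
  "right_mate X X' eta g eps' =
     lunit X \<cdot> (eps' \<otimes> idm X) \<cdot> assoc' X' (Cod g) X \<cdot> (idm X' \<otimes> ((g \<otimes> idm X) \<cdot> eta)) \<cdot> runit' X'"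

definition left_mate :: "'o \<Rightarrow> 'o \<Rightarrow> 'm \<Rightarrow> 'm \<Rightarrow> 'm \<Rightarrow> 'm" where
  "left_mate X X' eta g eps' =
     runit X \<cdot> (idm X \<otimes> eps') \<cdot> assoc X (Cod g) X' \<cdot> (((idm X \<otimes> g) \<cdot> eta) \<otimes> idm X') \<cdot> lunit' X'"

lemma right_mate_typing:
  assumes "dual_pair C (Dom f) (Dom g) e0 p0" "dual_pair C (Cod f) (Cod g) e1 p1" "f \<in> Ar" "g \<in> Ar"
  shows "right_mate (Dom f) (Cod f) e0 g p1 \<in> Ar"
    "Dom (right_mate (Dom f) (Cod f) e0 g p1) = Cod f" "Cod (right_mate (Dom f) (Cod f) e0 g p1) = Dom f"
  using dual_pairD[OF assms(1)] dual_pairD[OF assms(2)] assms(3,4) by (simp_all add: right_mate_def)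

lemma left_mate_typing:
  assumes "dual_pair C (Dom g) (Dom f) e0 p0" "dual_pair C (Cod g) (Cod f) e1 p1" "f \<in> Ar" "g \<in> Ar"
  shows "left_mate (Dom f) (Cod f) e0 g p1 \<in> Ar"
    "Dom (left_mate (Dom f) (Cod f) e0 g p1) = Cod f" "Cod (left_mate (Dom f) (Cod f) e0 g p1) = Dom f"
  using dual_pairD[OF assms(1)] dual_pairD[OF assms(2)] assms(3,4) by (simp_all add: left_mate_def)

lemma right_mate_comp_left:
  assumes fg: "f \<in> Ar" "g \<in> Ar"
    and d0: "dual_pair C (Dom f) (Dom g) e0 p0" and d1: "dual_pair C (Cod f) (Cod g) e1 p1"
    and sq: "p0 = p1 \<cdot> (f \<otimes> g)"
  shows "right_mate (Dom f) (Cod f) e0 g p1 \<cdot> f = idm (Dom f)"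
proof -
  note a = dual_pairD[OF d0] and b = dual_pairD[OF d1]
  note typed = a(1-8) b(1-8) fg
  have "right_mate (Dom f) (Cod f) e0 g p1 \<cdot> f = lunit (Dom f) \<cdot> (p1 \<otimes> idm (Dom f)) \<cdot> assoc' (Cod f) (Cod g) (Dom f) \<cdot> (idm (Cod f) \<otimes> ((g \<otimes> idm (Dom f)) \<cdot> e0)) \<cdot> runit' (Cod f) \<cdot> f"
    unfolding right_mate_def using typed by simp
  also have "\<dots> = lunit (Dom f) \<cdot> (p1 \<otimes> idm (Dom f)) \<cdot> assoc' (Cod f) (Cod g) (Dom f) \<cdot> (idm (Cod f) \<otimes> ((g \<otimes> idm (Dom f)) \<cdot> e0)) \<cdot> (f \<otimes> idm \<I>) \<cdot> runit' (Dom f)"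
    using typed by (simp only: typing runit'_nat)
  also have "\<dots> = lunit (Dom f) \<cdot> (p1 \<otimes> idm (Dom f)) \<cdot> assoc' (Cod f) (Cod g) (Dom f) \<cdot> (f \<otimes> (g \<otimes> idm (Dom f))) \<cdot> (idm (Dom f) \<otimes> e0) \<cdot> runit' (Dom f)"
    using typed by (simp add: tensor_comp)
  also have "\<dots> = lunit (Dom f) \<cdot> (p1 \<otimes> idm (Dom f)) \<cdot> ((f \<otimes> g) \<otimes> idm (Dom f)) \<cdot> assoc' (Dom f) (Dom g) (Dom f) \<cdot> (idm (Dom f) \<otimes> e0) \<cdot> runit' (Dom f)"
    using typed by (simp only: typing assoc'_nat_comp)
  also have "\<dots> = lunit (Dom f) \<cdot> (p0 \<otimes> idm (Dom f)) \<cdot> assoc' (Dom f) (Dom g) (Dom f) \<cdot> (idm (Dom f) \<otimes> e0) \<cdot> runit' (Dom f)"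
    using typed sq by (simp add: tensor_comp)
  also have "\<dots> = idm (Dom f)" using a(9) .
  finally show ?thesis .
qed

lemma right_mate_comp_right:
  assumes fg: "f \<in> Ar" "g \<in> Ar"
    and d0: "dual_pair C (Dom f) (Dom g) e0 p0" and d1: "dual_pair C (Cod f) (Cod g) e1 p1"
    and sq: "(g \<otimes> f) \<cdot> e0 = e1"
  shows "f \<cdot> right_mate (Dom f) (Cod f) e0 g p1 = idm (Cod f)"
proof -
  note a = dual_pairD[OF d0] and b = dual_pairD[OF d1]
  note typed = a(1-8) b(1-8) fg
  have "f \<cdot> right_mate (Dom f) (Cod f) e0 g p1 = f \<cdot> lunit (Dom f) \<cdot> (p1 \<otimes> idm (Dom f)) \<cdot> assoc' (Cod f) (Cod g) (Dom f) \<cdot> (idm (Cod f) \<otimes> ((g \<otimes> idm (Dom f)) \<cdot> e0)) \<cdot> runit' (Cod f)"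
    unfolding right_mate_def ..
  also have "\<dots> = lunit (Cod f) \<cdot> (idm \<I> \<otimes> f) \<cdot> (p1 \<otimes> idm (Dom f)) \<cdot> assoc' (Cod f) (Cod g) (Dom f) \<cdot> (idm (Cod f) \<otimes> ((g \<otimes> idm (Dom f)) \<cdot> e0)) \<cdot> runit' (Cod f)"
    using typed by (simp only: typing lunit_nat_comp_rev)
  also have "\<dots> = lunit (Cod f) \<cdot> (p1 \<otimes> idm (Cod f)) \<cdot> ((idm (Cod f) \<otimes> idm (Cod g)) \<otimes> f) \<cdot> assoc' (Cod f) (Cod g) (Dom f) \<cdot> (idm (Cod f) \<otimes> ((g \<otimes> idm (Dom f)) \<cdot> e0)) \<cdot> runit' (Cod f)"
    using typed by (simp add: tensor_comp)
  also have "\<dots> = lunit (Cod f) \<cdot> (p1 \<otimes> idm (Cod f)) \<cdot> assoc' (Cod f) (Cod g) (Cod f) \<cdot> (idm (Cod f) \<otimes> (idm (Cod g) \<otimes> f)) \<cdot> (idm (Cod f) \<otimes> ((g \<otimes> idm (Dom f)) \<cdot> e0)) \<cdot> runit' (Cod f)"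
    using typed by (simp only: typing assoc'_nat_comp_rev)
  also have "\<dots> = lunit (Cod f) \<cdot> (p1 \<otimes> idm (Cod f)) \<cdot> assoc' (Cod f) (Cod g) (Cod f) \<cdot> (idm (Cod f) \<otimes> e1) \<cdot> runit' (Cod f)"
    using typed sq by (simp add: tensor_comp)
  also have "\<dots> = idm (Cod f)" using b(9) .
  finally show ?thesis .
qed

lemma left_mate_comp_left:
  assumes fg: "f \<in> Ar" "g \<in> Ar"
    and d0: "dual_pair C (Dom g) (Dom f) e0 p0" and d1: "dual_pair C (Cod g) (Cod f) e1 p1"
    and sq: "p0 = p1 \<cdot> (g \<otimes> f)"
  shows "left_mate (Dom f) (Cod f) e0 g p1 \<cdot> f = idm (Dom f)"
proof -
  note a = dual_pairD[OF d0] and b = dual_pairD[OF d1]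
  note typed = a(1-8) b(1-8) fg
  have "left_mate (Dom f) (Cod f) e0 g p1 \<cdot> f = runit (Dom f) \<cdot> (idm (Dom f) \<otimes> p1) \<cdot> assoc (Dom f) (Cod g) (Cod f) \<cdot> (((idm (Dom f) \<otimes> g) \<cdot> e0) \<otimes> idm (Cod f)) \<cdot> lunit' (Cod f) \<cdot> f"
    unfolding left_mate_def using typed by simp
  also have "\<dots> = runit (Dom f) \<cdot> (idm (Dom f) \<otimes> p1) \<cdot> assoc (Dom f) (Cod g) (Cod f) \<cdot> (((idm (Dom f) \<otimes> g) \<cdot> e0) \<otimes> idm (Cod f)) \<cdot> (idm \<I> \<otimes> f) \<cdot> lunit' (Dom f)"
    using typed by (simp only: typing lunit'_nat)
  also have "\<dots> = runit (Dom f) \<cdot> (idm (Dom f) \<otimes> p1) \<cdot> assoc (Dom f) (Cod g) (Cod f) \<cdot> ((idm (Dom f) \<otimes> g) \<otimes> f) \<cdot> (e0 \<otimes> idm (Dom f)) \<cdot> lunit' (Dom f)"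
    using typed by (simp add: tensor_comp)
  also have "\<dots> = runit (Dom f) \<cdot> (idm (Dom f) \<otimes> p1) \<cdot> (idm (Dom f) \<otimes> (g \<otimes> f)) \<cdot> assoc (Dom f) (Dom g) (Dom f) \<cdot> (e0 \<otimes> idm (Dom f)) \<cdot> lunit' (Dom f)"
    using typed by (simp only: typing assoc_nat_comp)
  also have "\<dots> = runit (Dom f) \<cdot> (idm (Dom f) \<otimes> p0) \<cdot> assoc (Dom f) (Dom g) (Dom f) \<cdot> (e0 \<otimes> idm (Dom f)) \<cdot> lunit' (Dom f)"
    using typed sq by (simp add: tensor_comp)
  also have "\<dots> = idm (Dom f)" using a(10) .
  finally show ?thesis .
qed

lemma left_mate_comp_right:
  assumes fg: "f \<in> Ar" "g \<in> Ar"
    and d0: "dual_pair C (Dom g) (Dom f) e0 p0" and d1: "dual_pair C (Cod g) (Cod f) e1 p1"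
    and sq: "(f \<otimes> g) \<cdot> e0 = e1"
  shows "f \<cdot> left_mate (Dom f) (Cod f) e0 g p1 = idm (Cod f)"
proof -
  note a = dual_pairD[OF d0] and b = dual_pairD[OF d1]
  note typed = a(1-8) b(1-8) fg
  have "f \<cdot> left_mate (Dom f) (Cod f) e0 g p1 = f \<cdot> runit (Dom f) \<cdot> (idm (Dom f) \<otimes> p1) \<cdot> assoc (Dom f) (Cod g) (Cod f) \<cdot> (((idm (Dom f) \<otimes> g) \<cdot> e0) \<otimes> idm (Cod f)) \<cdot> lunit' (Cod f)"
    unfolding left_mate_def ..
  also have "\<dots> = runit (Cod f) \<cdot> (f \<otimes> idm \<I>) \<cdot> (idm (Dom f) \<otimes> p1) \<cdot> assoc (Dom f) (Cod g) (Cod f) \<cdot> (((idm (Dom f) \<otimes> g) \<cdot> e0) \<otimes> idm (Cod f)) \<cdot> lunit' (Cod f)"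
    using typed by (simp only: typing runit_nat_comp_rev)
  also have "\<dots> = runit (Cod f) \<cdot> (idm (Cod f) \<otimes> p1) \<cdot> (f \<otimes> (idm (Cod g) \<otimes> idm (Cod f))) \<cdot> assoc (Dom f) (Cod g) (Cod f) \<cdot> (((idm (Dom f) \<otimes> g) \<cdot> e0) \<otimes> idm (Cod f)) \<cdot> lunit' (Cod f)"
    using typed by (simp add: tensor_comp)
  also have "\<dots> = runit (Cod f) \<cdot> (idm (Cod f) \<otimes> p1) \<cdot> assoc (Cod f) (Cod g) (Cod f) \<cdot> ((f \<otimes> idm (Cod g)) \<otimes> idm (Cod f)) \<cdot> (((idm (Dom f) \<otimes> g) \<cdot> e0) \<otimes> idm (Cod f)) \<cdot> lunit' (Cod f)"
    using typed by (simp only: typing assoc_nat_comp_rev)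
  also have "\<dots> = runit (Cod f) \<cdot> (idm (Cod f) \<otimes> p1) \<cdot> assoc (Cod f) (Cod g) (Cod f) \<cdot> (e1 \<otimes> idm (Cod f)) \<cdot> lunit' (Cod f)"
    using typed sq by (simp add: tensor_comp)
  also have "\<dots> = idm (Cod f)" using b(10) .
  finally show ?thesis .
qed

lemma isoI:
  assumes "f \<in> Ar" "h \<in> Ar" "Dom h = Cod f" "Cod h = Dom f" "h \<cdot> f = idm (Dom f)" "f \<cdot> h = idm (Cod f)"
  shows "iso C f"
  using assms unfolding iso_def hom_def by blast

abbreviation Arr where "Arr \<equiv> arr_cat C"

lemma arr_simps:
  "cOb Arr = Ar"
  "(h,h',p,q) \<in> cAr Arr \<longleftrightarrow> h \<in> Ar \<and> h' \<in> Ar \<and> p \<in> hom C (Dom h) (Dom h') \<and> q \<in> hom C (Cod h) (Cod h') \<and> h' \<cdot> p = q \<cdot> h"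
  "cDom Arr (h,h',p,q) = h" "cCod Arr (h,h',p,q) = h'"
  "cComp Arr (h',h'',p',q') (h,h1,p,q) = (h,h'',p' \<cdot> p, q' \<cdot> q)"
  "cId Arr x = (x, x, idm (Dom x), idm (Cod x))"
  "cTens Arr = cTensM C"
  "cTensM Arr (a,b,c,d) (e,f,g,k) = (a \<otimes> e, b \<otimes> f, c \<otimes> g, d \<otimes> k)"
  "cUnit Arr = idm \<I>"
  "cAssoc Arr x y z = ((x \<otimes> y) \<otimes> z, x \<otimes> (y \<otimes> z), assoc (Dom x) (Dom y) (Dom z), assoc (Cod x) (Cod y) (Cod z))"
  "cLU Arr x = (idm \<I> \<otimes> x, x, lunit (Dom x), lunit (Cod x))"
  "cRU Arr x = (x \<otimes> idm \<I>, x, runit (Dom x), runit (Cod x))"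
  by (simp_all add: arr_cat_def)

lemma arr_inv:
  assumes "h \<in> Ar" "h' \<in> Ar" "iso C p" "iso C q" "Dom p = Dom h" "Cod p = Dom h'" "Dom q = Cod h" "Cod q = Cod h'"
    "h' \<cdot> p = q \<cdot> h"
  shows "Defs.inv Arr (h,h',p,q) = (h', h, inv\<^sub>C p, inv\<^sub>C q)"
proof -
  have pq: "p \<in> Ar" "q \<in> Ar" using assms iso_ar by auto
  have sq: "h \<cdot> inv\<^sub>C p = inv\<^sub>C q \<cdot> h'"
    using iso_square_inv[of q p h h'] assms pq by simp
  show ?thesis
    unfolding inv_def[of "arr_cat C"]
  proof (rule the_equality)
    show "(h', h, inv\<^sub>C p, inv\<^sub>C q) \<in> hom Arr (cCod Arr (h, h', p, q)) (cDom Arr (h, h', p, q)) \<and>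
      cComp Arr (h', h, inv\<^sub>C p, inv\<^sub>C q) (h, h', p, q) = cId Arr (cDom Arr (h, h', p, q)) \<and>
      cComp Arr (h, h', p, q) (h', h, inv\<^sub>C p, inv\<^sub>C q) = cId Arr (cCod Arr (h, h', p, q))"
      using assms pq sq by (simp add: hom_def arr_simps)
  next
    fix g assume g: "g \<in> hom Arr (cCod Arr (h, h', p, q)) (cDom Arr (h, h', p, q)) \<and>
      cComp Arr g (h, h', p, q) = cId Arr (cDom Arr (h, h', p, q)) \<and>
      cComp Arr (h, h', p, q) g = cId Arr (cCod Arr (h, h', p, q))"
    obtain a b c d where gd: "g = (a,b,c,d)" by (cases g rule: prod_cases4)
    from g have *: "a = h'" "b = h" "c \<in> Ar" "Dom c = Dom h'" "Cod c = Dom h" "d \<in> Ar" "Dom d = Cod h'" "Cod d = Cod h"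
      "c \<cdot> p = idm (Dom h)" "p \<cdot> c = idm (Dom h')" "d \<cdot> q = idm (Cod h)" "q \<cdot> d = idm (Cod h')"
      unfolding gd by (auto simp: hom_def arr_simps)
    have "inv\<^sub>C p = c" using inv_eqI[of p c] * pq assms by simp
    moreover have "inv\<^sub>C q = d" using inv_eqI[of q d] * pq assms by simp
    ultimately show "g = (h', h, inv\<^sub>C p, inv\<^sub>C q)" using gd * by simp
  qed
qed

lemma arr_dual_pair_iff:
  "dual_pair Arr X Y (a,b,c,d) (e,f,g,k) \<longleftrightarrow> X \<in> Ar \<and> Y \<in> Ar \<and> a = idm \<I> \<and> b = Y \<otimes> X \<and> e = X \<otimes> Y \<and> f = idm \<I> \<and>
     dual_pair C (Dom X) (Dom Y) c g \<and> dual_pair C (Cod X) (Cod Y) d k \<and> (Y \<otimes> X) \<cdot> c = d \<and> g = k \<cdot> (X \<otimes> Y)"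
proof (cases "X \<in> Ar \<and> Y \<in> Ar")
  case False
  then show ?thesis unfolding dual_pair_def by (auto simp: arr_simps)
next
  case True
  have ia: "Defs.inv Arr ((x \<otimes> y) \<otimes> z, x \<otimes> (y \<otimes> z), assoc (Dom x) (Dom y) (Dom z), assoc (Cod x) (Cod y) (Cod z))
     = (x \<otimes> (y \<otimes> z), (x \<otimes> y) \<otimes> z, assoc' (Dom x) (Dom y) (Dom z), assoc' (Cod x) (Cod y) (Cod z))"
    if "x \<in> Ar" "y \<in> Ar" "z \<in> Ar" for x y z
    using that assoc_nat[of x y z] by (intro arr_inv) simp_all
  have il: "Defs.inv Arr (idm \<I> \<otimes> x, x, lunit (Dom x), lunit (Cod x)) = (x, idm \<I> \<otimes> x, lunit' (Dom x), lunit' (Cod x))"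
    if "x \<in> Ar" for x
    using that lunit_nat[of x] by (intro arr_inv) simp_all
  have ir: "Defs.inv Arr (x \<otimes> idm \<I>, x, runit (Dom x), runit (Cod x)) = (x, x \<otimes> idm \<I>, runit' (Dom x), runit' (Cod x))"
    if "x \<in> Ar" for x
    using that runit_nat[of x] by (intro arr_inv) simp_all
  show ?thesis
    unfolding dual_pair_def using True
    by (auto simp: ia il ir hom_def arr_simps)
qed

lemma iso_if_arr_has_right_dual:
  assumes "has_right_dual Arr f"
  shows "iso C f"
proof -
  obtain g e0 p0 e1 p1 where fg: "f \<in> Ar" "g \<in> Ar"
    and d0: "dual_pair C (Dom f) (Dom g) e0 p0" and d1: "dual_pair C (Cod f) (Cod g) e1 p1"
    and sq: "(g \<otimes> f) \<cdot> e0 = e1" "p0 = p1 \<cdot> (f \<otimes> g)"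
    using assms unfolding has_right_dual_def split_paired_Ex arr_dual_pair_iff by blast
  show ?thesis
    using isoI right_mate_typing[OF d0 d1 fg] right_mate_comp_left[OF fg d0 d1 sq(2)]
      right_mate_comp_right[OF fg d0 d1 sq(1)] fg by blast
qed

lemma iso_if_arr_has_left_dual:
  assumes "has_left_dual Arr f"
  shows "iso C f"
proof -
  obtain g e0 p0 e1 p1 where fg: "f \<in> Ar" "g \<in> Ar"
    and d0: "dual_pair C (Dom g) (Dom f) e0 p0" and d1: "dual_pair C (Cod g) (Cod f) e1 p1"
    and sq: "(f \<otimes> g) \<cdot> e0 = e1" "p0 = p1 \<cdot> (g \<otimes> f)"
    using assms unfolding has_left_dual_def split_paired_Ex arr_dual_pair_iff by blast
  show ?thesis
    using isoI left_mate_typing[OF d0 d1 fg] left_mate_comp_left[OF fg d0 d1 sq(2)]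
      left_mate_comp_right[OF fg d0 d1 sq(1)] fg by blast
qed

text \<open>For an isomorphism \<open>f : A \<rightarrow> B\<close>, the identity on a dual of \<open>A\<close> is dual to \<open>f\<close>: the duality on
  the codomain side is the one for \<open>A\<close> transported along \<open>f\<close>.\<close>

lemma arr_has_right_dual_if_iso:
  assumes f: "iso C f" and "has_right_dual C (Dom f)"
  shows "has_right_dual Arr f"
proof -
  obtain Y eta eps where dp: "dual_pair C (Dom f) Y eta eps"
    using assms(2) unfolding has_right_dual_def by blast
  have "dual_pair Arr f (idm Y) (idm \<I>, idm Y \<otimes> f, eta, (idm Y \<otimes> f) \<cdot> eta)
      (f \<otimes> idm Y, idm \<I>, eps, eps \<cdot> (inv\<^sub>C f \<otimes> idm Y))"
    unfolding arr_dual_pair_iff using dual_pairD[OF dp] iso_ar[OF f] f dp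
      dual_pair_transport_left[OF dp f refl refl] by (simp add: tensor_comp)
  then show ?thesis unfolding has_right_dual_def by blast
qed

lemma arr_has_left_dual_if_iso:
  assumes f: "iso C f" and "has_left_dual C (Dom f)"
  shows "has_left_dual Arr f"
proof -
  obtain X eta eps where dp: "dual_pair C X (Dom f) eta eps"
    using assms(2) unfolding has_left_dual_def by blast
  have "dual_pair Arr (idm X) f (idm \<I>, f \<otimes> idm X, eta, (f \<otimes> idm X) \<cdot> eta)
      (idm X \<otimes> f, idm \<I>, eps, eps \<cdot> (idm X \<otimes> inv\<^sub>C f))"
    unfolding arr_dual_pair_iff using dual_pairD[OF dp] iso_ar[OF f] f dp
      dual_pair_transport_right[OF dp f refl refl] by (simp add: tensor_comp)
  then show ?thesis unfolding has_left_dual_def by blast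
qed

end

theorem mainTheorem11:
  fixes C :: "('o, 'm) mcat" and f :: 'm
  assumes "rigid C" and "f \<in> cAr C"
  shows "(has_right_dual (arr_cat C) f \<longleftrightarrow> iso C f) \<and>
         (has_left_dual (arr_cat C) f \<longleftrightarrow> iso C f)"
proof -
  interpret monoidal_cat C
    using assms(1) unfolding rigid_def by unfold_locales blast
  have "has_left_dual C (Dom f)" "has_right_dual C (Dom f)"
    using assms unfolding rigid_def by simp_all
  then show ?thesis
    using iso_if_arr_has_right_dual arr_has_right_dual_if_iso
      iso_if_arr_has_left_dual arr_has_left_dual_if_iso by blast
qed

end
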